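(* Let $H$ be a Hilbert space and $W(\cdot)$ denote numerical range. (i) For $T,S\in\mathcal{L}(H)$, $\mathfrak{d}(\overline{W(T)},\overline{W(S)})\le\|T-S\|$. (ii) If $H_1\subset H_2\subset\cdots\subset H$ are nonzero closed subspaces with $\overline{\bigcup_nH_n}=H$, then for every $T\in\mathcal{L}(H)$, $\overline{W(T)}=\overline{\bigcup_nW(P_{H_n}T|_{H_n})}$; in particular $\mathfrak{d}(\overline{W(P_{H_n}T|_{H_n})},\overline{W(T)})\to0$. (iii) If $T\in\mathcal{L}(H)$ and $P,Q$ are nonzero orthogonal projections on $H$ with $\|P-Q\|<1$, then \[ \mathfrak{d}\big(\overline{W(PTP|_{PH})},\overline{W(QTQ|_{QH})}\big)\le\|T\|\,\|P-Q\|\Big[1+\frac{2}{(1-\|P-Q\|)^2}\Big]. \] In particular, if $P_n,P$ are nonzero orthogonal projections with $\|P_n-P\|\to0$, then $\mathfrak{d}(\overline{W(P_nTP_n|_{P_nH})},\overline{W(PTP|_{PH})})\to0$.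
   Context: The numerical range of $T\in\mathcal{L}(H)$ is $W(T)=\{\langle Tx,x\rangle:\|x\|=1\}$. $\mathfrak{d}$ denotes the Hausdorff distance between nonempty compact subsets of $\mathbb{C}$. *)

theory Defs
  imports "HOL-Analysis.Analysis"
begin

text \<open>HOL-Analysis only has real inner product spaces, so a complex
inner product space is introduced as a type class on top of a real normed
vector space: a complex scalar multiplication compatible with the real one,
and a complex inner product (linear in the first argument, conjugate
symmetric, positive) inducing the norm.\<close>

class complex_inner_space = real_normed_vector +
  fixes cscale :: "complex \<Rightarrow> 'a \<Rightarrow> 'a"
    and cinner :: "'a \<Rightarrow> 'a \<Rightarrow> complex"
  assumes cscale_add_right: "cscale a (x + y) = cscale a x + cscale a y"
    and cscale_add_left: "cscale (a + b) x = cscale a x + cscale b x"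
    and cscale_cscale: "cscale a (cscale b x) = cscale (a * b) x"
    and cscale_one: "cscale 1 x = x"
    and cscale_of_real: "cscale (complex_of_real r) x = scaleR r x"
    and cinner_commute: "cinner x y = cnj (cinner y x)"
    and cinner_add_left: "cinner (x + y) z = cinner x z + cinner y z"
    and cinner_cscale_left: "cinner (cscale a x) y = a * cinner x y"
    and cinner_self_nonneg: "0 \<le> Re (cinner x x)"
    and norm_eq_sqrt_cinner: "norm x = sqrt (Re (cinner x x))"

class complex_hilbert_space = complex_inner_space + complete_space

definition clinear :: "('a::complex_inner_space \<Rightarrow> 'a) \<Rightarrow> bool" where
  "clinear T \<longleftrightarrow> (\<forall>x y. T (x + y) = T x + T y) \<and> (\<forall>a x. T (cscale a x) = cscale a (T x))"

definition bounded_op :: "('a::complex_inner_space \<Rightarrow> 'a) \<Rightarrow> bool" where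
  "bounded_op T \<longleftrightarrow> clinear T \<and> (\<exists>K. \<forall>x. norm (T x) \<le> K * norm x)"

definition closed_csubspace :: "'a::complex_inner_space set \<Rightarrow> bool" where
  "closed_csubspace M \<longleftrightarrow> 0 \<in> M \<and> (\<forall>x\<in>M. \<forall>y\<in>M. x + y \<in> M)
      \<and> (\<forall>a. \<forall>x\<in>M. cscale a x \<in> M) \<and> closed M"

definition proj_onto :: "'a::complex_inner_space set \<Rightarrow> 'a \<Rightarrow> 'a" where
  "proj_onto M x = (THE y. y \<in> M \<and> (\<forall>z\<in>M. cinner (x - y) z = 0))"

definition orth_projection :: "('a::complex_inner_space \<Rightarrow> 'a) \<Rightarrow> bool" where
  "orth_projection P \<longleftrightarrow> bounded_op P \<and> (\<forall>x. P (P x) = P x)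
      \<and> (\<forall>x y. cinner (P x) y = cinner x (P y))"

definition numrange_on :: "'a::complex_inner_space set \<Rightarrow> ('a \<Rightarrow> 'a) \<Rightarrow> complex set" where
  "numrange_on M A = {cinner (A x) x | x. x \<in> M \<and> norm x = 1}"

definition numrange :: "('a::complex_inner_space \<Rightarrow> 'a) \<Rightarrow> complex set" where
  "numrange T = numrange_on UNIV T"

text \<open>Hausdorff distance (used for nonempty compact subsets of \<open>\<complex>\<close>).\<close>
definition hausdorff_dist :: "complex set \<Rightarrow> complex set \<Rightarrow> real" where
  "hausdorff_dist A B = max (SUP x\<in>A. infdist x B) (SUP y\<in>B. infdist y A)"

end

theory Submission
  imports Defs
begin

text \<open>
  For unit vectors the quadratic form \<open>x \<mapsto> \<langle>Tx,x\<rangle>\<close> is Lipschitz in \<open>T\<close>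
  with constant 1, which gives (i) at once.  For the compressions \<open>PTP|PH\<close>
  and \<open>QTQ|QH\<close> one notes that their numerical ranges are simply the values
  \<open>\<langle>Tx,x\<rangle>\<close> on the unit spheres of \<open>PH\<close>, \<open>QH\<close>.  A unit vector \<open>x \<in> PH\<close>
  is matched with the normalisation of \<open>Qx\<close>; since \<open>Qx \<perp> x - Qx\<close> and
  \<open>\<parallel>x - Qx\<parallel> \<le> \<parallel>P - Q\<parallel>\<close>, a perturbation estimate for the Rayleigh quotient
  \<open>\<langle>Ta,a\<rangle>/\<parallel>a\<parallel>\<^sup>2\<close> yields (iii), and (iv) follows by letting \<open>\<parallel>P\<^sub>n - P\<parallel> \<rightarrow> 0\<close>.
  For (ii), the compression to \<open>H\<^sub>n\<close> again has numerical range \<open>{\<langle>Tx,x\<rangle>}\<close>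
  over unit \<open>x \<in> H\<^sub>n\<close> (this needs the orthogonal projection onto a closed
  subspace, constructed here via the nearest-point theorem); continuity of
  the Rayleigh quotient and density of \<open>\<Union>H\<^sub>n\<close> give the closure identity, and
  a compactness argument turns the increasing exhaustion into convergence
  in Hausdorff distance.
\<close>

section \<open>Algebra of the complex inner product\<close>

lemma cinner_zero_left [simp]: "cinner (0::'a::complex_inner_space) y = 0"
  using cinner_add_left[of "0::'a" 0 y] by simp

lemma cinner_zero_right [simp]: "cinner (x::'a::complex_inner_space) 0 = 0"
  using cinner_commute[of x 0] by simp

lemma cinner_add_right: "cinner (x::'a::complex_inner_space) (y + z) = cinner x y + cinner x z"
  by (metis cinner_add_left cinner_commute complex_cnj_add)

lemma cinner_minus_left: "cinner (- (x::'a::complex_inner_space)) y = - cinner x y"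
  using cinner_add_left[of x "-x" y] minus_unique[of "cinner x y" "cinner (-x) y"] by simp

lemma cinner_minus_right: "cinner (x::'a::complex_inner_space) (- y) = - cinner x y"
  by (metis cinner_commute cinner_minus_left complex_cnj_minus)

lemma cinner_diff_left: "cinner ((x::'a::complex_inner_space) - y) z = cinner x z - cinner y z"
  by (simp only: diff_conv_add_uminus cinner_add_left cinner_minus_left)

lemma cinner_diff_right: "cinner (x::'a::complex_inner_space) (y - z) = cinner x y - cinner x z"
  by (simp only: diff_conv_add_uminus cinner_add_right cinner_minus_right)

lemma cinner_cscale_right: "cinner (x::'a::complex_inner_space) (cscale a y) = cnj a * cinner x y"
  by (metis cinner_commute cinner_cscale_left complex_cnj_mult)

lemma cinner_scaleR_left: "cinner (r *\<^sub>R (x::'a::complex_inner_space)) y = of_real r * cinner x y"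
  by (metis cinner_cscale_left cscale_of_real)

lemma cinner_scaleR_right: "cinner (x::'a::complex_inner_space) (r *\<^sub>R y) = of_real r * cinner x y"
  by (metis cinner_cscale_right cscale_of_real complex_cnj_complex_of_real)

lemma cinner_self_eq: "cinner (x::'a::complex_inner_space) x = of_real ((norm x)\<^sup>2)"
proof -
  have "Im (cinner x x) = 0"
    using cinner_commute[of x x] by (metis Im_complex_of_real Reals_cnj_iff complex_is_Real_iff)
  then show ?thesis
    by (simp add: complex_eq_iff norm_eq_sqrt_cinner cinner_self_nonneg)
qed

lemma norm_add_sq:
  "(norm ((x::'a::complex_inner_space) + y))\<^sup>2 = (norm x)\<^sup>2 + (norm y)\<^sup>2 + 2 * Re (cinner x y)"
proof -
  have "Re (cinner y x) = Re (cinner x y)" by (subst cinner_commute) simp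
  then show ?thesis
    using cinner_self_eq[of "x + y"] cinner_self_eq[of x] cinner_self_eq[of y]
    by (simp add: cinner_add_left cinner_add_right complex_eq_iff)
qed

lemma norm_diff_sq:
  "(norm ((x::'a::complex_inner_space) - y))\<^sup>2 = (norm x)\<^sup>2 + (norm y)\<^sup>2 - 2 * Re (cinner x y)"
  using norm_add_sq[of x "-y"] by (simp add: cinner_minus_right)

text \<open>Subtracting from \<open>w\<close> its real component along \<open>z\<close> decreases \<open>\<parallel>w\<parallel>\<^sup>2\<close>
  by exactly \<open>(Re \<langle>w,z\<rangle>)\<^sup>2/\<parallel>z\<parallel>\<^sup>2\<close>; this one identity yields both the
  Cauchy--Schwarz inequality and the orthogonality of nearest points.\<close>
lemma norm_diff_real_component_sq:
  fixes w z :: "'a::complex_inner_space"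
  assumes "z \<noteq> 0"
  shows "(norm (w - (Re (cinner w z) / (norm z)\<^sup>2) *\<^sub>R z))\<^sup>2
           = (norm w)\<^sup>2 - (Re (cinner w z))\<^sup>2 / (norm z)\<^sup>2"
proof -
  have N: "(norm z)\<^sup>2 > 0" using assms by simp
  show ?thesis
    unfolding norm_diff_sq cinner_scaleR_right norm_scaleR power_mult_distrib real_norm_def power2_abs
    using N by (simp add: field_simps power2_eq_square)
qed

lemma Re_cinner_le: "\<bar>Re (cinner (x::'a::complex_inner_space) y)\<bar> \<le> norm x * norm y"
proof (cases "y = 0")
  case False
  have "0 \<le> (norm x)\<^sup>2 - (Re (cinner x y))\<^sup>2 / (norm y)\<^sup>2"
    using norm_diff_real_component_sq[OF False, of x] by (metis zero_le_power2)
  then have "\<bar>Re (cinner x y)\<bar>\<^sup>2 \<le> (norm x * norm y)\<^sup>2"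
    using False by (simp add: field_simps power_mult_distrib)
  then show ?thesis by (rule power2_le_imp_le) simp
qed simp

lemma norm_cscale: "norm (cscale a (x::'a::complex_inner_space)) = norm a * norm x"
proof -
  have "(norm (cscale a x))\<^sup>2 = Re (a * cnj a * cinner x x)"
    using cinner_self_eq[of "cscale a x"]
    by (simp add: cinner_cscale_left cinner_cscale_right mult.assoc mult.left_commute)
  also have "\<dots> = (norm a * norm x)\<^sup>2"
    by (simp only: cinner_self_eq complex_norm_square[symmetric] power_mult_distrib flip: of_real_mult)
       (simp only: Re_complex_of_real)
  finally show ?thesis by (simp add: power2_eq_iff_nonneg)
qed

text \<open>Cauchy--Schwarz: rotate \<open>x\<close> by a unit scalar so that \<open>\<langle>x,y\<rangle>\<close> becomes real.\<close>
lemma cinner_le: "norm (cinner (x::'a::complex_inner_space) y) \<le> norm x * norm y"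
proof (cases "cinner x y = 0")
  case False
  define z where "z = cinner x y"
  define u where "u = cnj z / of_real (norm z)"
  have nu: "norm u = 1" using False by (simp add: u_def z_def norm_divide)
  have "cinner (cscale u x) y = of_real (norm z)"
    using False by (simp add: cinner_cscale_left u_def z_def complex_norm_square[symmetric]
        power2_eq_square complex_mult_cnj[symmetric] mult.commute)
  then have "norm z = Re (cinner (cscale u x) y)" by simp
  also have "\<dots> \<le> norm (cscale u x) * norm y" using Re_cinner_le[of "cscale u x" y] by simp
  finally show ?thesis by (simp add: norm_cscale nu z_def)
qed simp

lemma bounded_bilinear_cinner: "bounded_bilinear (cinner :: 'a::complex_inner_space \<Rightarrow> 'a \<Rightarrow> complex)"
proof
  fix a a' b b' :: 'a and r :: real
  show "cinner (a + a') b = cinner a b + cinner a' b" by (rule cinner_add_left)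
  show "cinner a (b + b') = cinner a b + cinner a b'" by (rule cinner_add_right)
  show "cinner (r *\<^sub>R a) b = r *\<^sub>R cinner a b" by (simp add: cinner_scaleR_left scaleR_conv_of_real)
  show "cinner a (r *\<^sub>R b) = r *\<^sub>R cinner a b" by (simp add: cinner_scaleR_right scaleR_conv_of_real)
  show "\<exists>K. \<forall>a b::'a. norm (cinner a b) \<le> norm a * norm b * K"
    by (rule exI[of _ 1]) (simp add: cinner_le)
qed

lemmas tendsto_cinner = bounded_bilinear.tendsto[OF bounded_bilinear_cinner]

section \<open>Orthogonal projection onto a closed subspace\<close>

lemma subspace_scaleR: "closed_csubspace M \<Longrightarrow> x \<in> M \<Longrightarrow> r *\<^sub>R x \<in> M"
  unfolding closed_csubspace_def by (metis cscale_of_real)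

lemma subspace_add: "closed_csubspace M \<Longrightarrow> x \<in> M \<Longrightarrow> y \<in> M \<Longrightarrow> x + y \<in> M"
  unfolding closed_csubspace_def by blast

lemma subspace_cscale: "closed_csubspace M \<Longrightarrow> x \<in> M \<Longrightarrow> cscale a x \<in> M"
  unfolding closed_csubspace_def by blast

lemma subspace_diff: "closed_csubspace M \<Longrightarrow> x \<in> M \<Longrightarrow> y \<in> M \<Longrightarrow> x - y \<in> M"
  using subspace_add[of M x "(-1) *\<^sub>R y"] subspace_scaleR[of M y "-1"] by simp

lemma parallelogram_law:
  "(norm ((u::'a::complex_inner_space) + v))\<^sup>2 + (norm (u - v))\<^sup>2 = 2 * (norm u)\<^sup>2 + 2 * (norm v)\<^sup>2"
  unfolding norm_add_sq norm_diff_sq by simp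

text \<open>Uniform convexity in the form needed for the nearest-point theorem: by
  the parallelogram law, two points of a midpoint-convex set that nearly
  minimise the distance to \<open>x\<close> are close to each other.\<close>
lemma near_minimisers_close:
  fixes x v w :: "'a::complex_inner_space"
  assumes mid: "(1/2) *\<^sub>R (v + w) \<in> M"
    and v: "dist x v \<le> infdist x M + e1" and w: "dist x w \<le> infdist x M + e2"
  shows "(norm (v - w))\<^sup>2 \<le> 2 * (infdist x M + e1)\<^sup>2 + 2 * (infdist x M + e2)\<^sup>2 - 4 * (infdist x M)\<^sup>2"
proof -
  define d where "d = infdist x M"
  have d0: "0 \<le> d" unfolding d_def by (rule infdist_nonneg)
  have "d \<le> norm (x - (1/2) *\<^sub>R (v + w))"
    unfolding d_def using infdist_le[OF mid] by (simp add: dist_norm)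
  then have "4 * d\<^sup>2 \<le> (norm ((x - v) + (x - w)))\<^sup>2"
    using d0 norm_scaleR[of 2 "x - (1/2) *\<^sub>R (v + w)"]
    by (simp add: algebra_simps scaleR_2 power_mult_distrib power_mono)
  moreover have "(norm ((x - v) + (x - w)))\<^sup>2 + (norm (v - w))\<^sup>2
                   = 2 * (norm (x - v))\<^sup>2 + 2 * (norm (x - w))\<^sup>2"
    using parallelogram_law[of "x - v" "x - w"] by (simp add: norm_minus_commute)
  moreover have "(norm (x - v))\<^sup>2 \<le> (d + e1)\<^sup>2" "(norm (x - w))\<^sup>2 \<le> (d + e2)\<^sup>2"
    using v w by (simp_all add: d_def dist_norm power_mono)
  ultimately show ?thesis unfolding d_def by linarith
qed

text \<open>A minimising sequence is Cauchy by
  the previous lemma, and its limit lies in the subspace by closedness.\<close>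
lemma nearest_point_exists:
  fixes M :: "'a::complex_hilbert_space set"
  assumes M: "closed_csubspace M"
  shows "\<exists>y\<in>M. \<forall>v\<in>M. norm (x - y) \<le> norm (x - v)"
proof -
  have Mne: "M \<noteq> {}" and Mcl: "closed M" using M unfolding closed_csubspace_def by auto
  define d where "d = infdist x M"
  define e :: "nat \<Rightarrow> real" where "e k = inverse (real (Suc k))" for k
  have e0: "0 < e k" for k by (simp add: e_def)
  have e_lim: "e \<longlonglongrightarrow> 0" unfolding e_def by (rule LIMSEQ_inverse_real_of_nat)
  have "\<exists>m\<in>M. dist x m < d + e k" for k
  proof -
    have "(INF a\<in>M. dist x a) < d + e k" using e0[of k] by (simp add: d_def infdist_notempty[OF Mne])
    then show ?thesis using Mne by (subst (asm) cINF_less_iff) (auto intro: bdd_belowI[of _ 0])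
  qed
  then obtain m where mM: "\<And>k. m k \<in> M" and md: "\<And>k. dist x (m k) \<le> d + e k"
    by (metis less_imp_le)
  define g where "g k = 2 * (d + e k)\<^sup>2 - 2 * d\<^sup>2" for k
  have g_lim: "g \<longlonglongrightarrow> 0"
    unfolding g_def using e_lim by (auto intro!: tendsto_eq_intros)
  have close: "(norm (m j - m k))\<^sup>2 \<le> g j + g k" for j k
  proof -
    have "(1/2) *\<^sub>R (m j + m k) \<in> M" by (intro subspace_scaleR subspace_add M mM)
    from near_minimisers_close[OF this md[unfolded d_def] md[unfolded d_def]]
    show ?thesis by (simp add: g_def d_def)
  qed
  have "Cauchy m"
  proof (rule CauchyI)
    fix \<epsilon> :: real assume \<epsilon>: "0 < \<epsilon>"
    then have "\<forall>\<^sub>F n in sequentially. g n < \<epsilon>\<^sup>2 / 2" using g_lim by (intro order_tendstoD) auto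
    then obtain N where N: "\<And>n. N \<le> n \<Longrightarrow> g n < \<epsilon>\<^sup>2 / 2" by (auto simp: eventually_sequentially)
    have "norm (m j - m k) < \<epsilon>" if "N \<le> j" "N \<le> k" for j k
    proof -
      have "(norm (m j - m k))\<^sup>2 < \<epsilon>\<^sup>2" using close[of j k] N[OF that(1)] N[OF that(2)] by linarith
      then show ?thesis using \<epsilon> by (simp add: power_less_imp_less_base)
    qed
    then show "\<exists>M. \<forall>j\<ge>M. \<forall>k\<ge>M. norm (m j - m k) < \<epsilon>" by blast
  qed
  then obtain y where my: "m \<longlonglongrightarrow> y" by (auto simp: Cauchy_convergent_iff convergent_def)
  have "dist x y \<le> d"
  proof (rule tendsto_le[OF trivial_limit_sequentially])
    show "(\<lambda>k. d + e k) \<longlonglongrightarrow> d" using tendsto_add[OF tendsto_const e_lim] by simp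
    show "(\<lambda>k. dist x (m k)) \<longlonglongrightarrow> dist x y" by (intro tendsto_intros my)
    show "\<forall>\<^sub>F k in sequentially. dist x (m k) \<le> d + e k" using md by simp
  qed
  moreover have "d \<le> dist x v" if "v \<in> M" for v unfolding d_def using that by (rule infdist_le)
  moreover have "y \<in> M" using closed_sequentially[OF Mcl mM my] .
  ultimately show ?thesis by (force simp: dist_norm)
qed

text \<open>A nearest point \<open>y\<close> of a subspace is characterised by \<open>x - y \<perp> M\<close>:
  moving \<open>y\<close> along \<open>u \<in> M\<close> cannot decrease the distance, which forces
  \<open>Re \<langle>x - y, u\<rangle> = 0\<close>; applying this to \<open>i u\<close> kills the imaginary part.\<close>
lemma nearest_point_orthogonal:
  fixes M :: "'a::complex_inner_space set"
  assumes M: "closed_csubspace M" and y: "y \<in> M"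
    and min: "\<And>v. v \<in> M \<Longrightarrow> norm (x - y) \<le> norm (x - v)" and z: "z \<in> M"
  shows "cinner (x - y) z = 0"
proof -
  have Re0: "Re (cinner (x - y) u) = 0" if u: "u \<in> M" for u
  proof (cases "u = 0")
    case False
    define t where "t = Re (cinner (x - y) u) / (norm u)\<^sup>2"
    have "y + t *\<^sub>R u \<in> M" by (intro subspace_add subspace_scaleR M y u)
    then have "(norm (x - y))\<^sup>2 \<le> (norm (x - y - t *\<^sub>R u))\<^sup>2"
      using min by (simp add: diff_diff_eq power_mono)
    also have "\<dots> = (norm (x - y))\<^sup>2 - (Re (cinner (x - y) u))\<^sup>2 / (norm u)\<^sup>2"
      unfolding t_def by (rule norm_diff_real_component_sq[OF False])
    finally have "(Re (cinner (x - y) u))\<^sup>2 / (norm u)\<^sup>2 \<le> 0" by simp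
    then show ?thesis using False by (simp add: divide_le_0_iff)
  qed simp
  from Re0[OF z] Re0[OF subspace_cscale[OF M z, of \<i>]] show ?thesis
    by (simp add: cinner_cscale_right complex_eq_iff)
qed

lemma proj_onto_props:
  fixes M :: "'a::complex_hilbert_space set"
  assumes M: "closed_csubspace M"
  shows "proj_onto M x \<in> M \<and> (\<forall>z\<in>M. cinner (x - proj_onto M x) z = 0)"
  unfolding proj_onto_def
proof (rule theI')
  show "\<exists>!y. y \<in> M \<and> (\<forall>z\<in>M. cinner (x - y) z = 0)"
  proof (rule ex_ex1I)
    show "\<exists>y. y \<in> M \<and> (\<forall>z\<in>M. cinner (x - y) z = 0)"
      using nearest_point_exists[OF M, of x] nearest_point_orthogonal[OF M] by blast
  next
    fix y1 y2
    assume 1: "y1 \<in> M \<and> (\<forall>z\<in>M. cinner (x - y1) z = 0)"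
      and 2: "y2 \<in> M \<and> (\<forall>z\<in>M. cinner (x - y2) z = 0)"
    then have dM: "y1 - y2 \<in> M" using subspace_diff[OF M] by blast
    have "cinner (y1 - y2) (y1 - y2) = cinner ((x - y2) - (x - y1)) (y1 - y2)" by simp
    also have "\<dots> = 0" using 1 2 dM by (simp only: cinner_diff_left) simp
    finally show "y1 = y2" by (simp add: cinner_self_eq)
  qed
qed

lemma proj_onto_cinner:
  fixes M :: "'a::complex_hilbert_space set"
  assumes "closed_csubspace M" "z \<in> M"
  shows "cinner (proj_onto M x) z = cinner x z"
  using proj_onto_props[OF assms(1), of x] assms(2) by (auto simp: cinner_diff_left)

lemma bounded_op_linear: "bounded_op T \<Longrightarrow> bounded_linear T"
  unfolding bounded_op_def clinear_def
  by (metis bounded_linear_intro cscale_of_real mult.commute)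

lemma norm_cinner_op_le:
  assumes "bounded_linear T" "norm (x::'a::complex_inner_space) = 1"
  shows "norm (cinner (T x) x) \<le> onorm T"
  using cinner_le[of "T x" x] onorm[OF assms(1), of x] assms(2) by simp

lemma orth_projection_linear: "orth_projection P \<Longrightarrow> bounded_linear P"
  unfolding orth_projection_def by (auto intro: bounded_op_linear)

lemma orth_projection_fixes_range: "orth_projection P \<Longrightarrow> x \<in> range P \<Longrightarrow> P x = x"
  unfolding orth_projection_def by auto

lemma orth_projection_compression_form:
  assumes "orth_projection P" "x \<in> range P"
  shows "cinner (P (T (P x))) x = cinner (T x) x"
  using assms unfolding orth_projection_def by (metis rangeE)

lemma orth_projection_residual_orthogonal:
  assumes "orth_projection Q"
  shows "cinner (Q x) (x - Q x) = 0"
proof -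
  have "cinner (Q x) (Q x) = cinner (Q x) x"
    using assms unfolding orth_projection_def by metis
  then show ?thesis by (simp add: cinner_diff_right)
qed

lemma range_linear_scaleR: "bounded_linear P \<Longrightarrow> x \<in> range P \<Longrightarrow> r *\<^sub>R x \<in> range P"
  by (metis linear_scale[OF bounded_linear.linear] rangeE rangeI)

lemma orth_projection_unit_vector:
  assumes "orth_projection P" "P \<noteq> (\<lambda>x. 0)"
  shows "\<exists>x\<in>range P. norm x = 1"
proof -
  obtain x0 where "P x0 \<noteq> 0" using assms(2) by auto
  then show ?thesis
    using range_linear_scaleR[OF orth_projection_linear[OF assms(1)], of "P x0" "inverse (norm (P x0))"]
    by (metis rangeI norm_sgn sgn_div_norm scaleR_conv_of_real divide_inverse_commute)
qed

text \<open>The Rayleigh quotient \<open>\<langle>Tz,z\<rangle>/\<parallel>z\<parallel>\<^sup>2\<close> is the value of the quadratic form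
  at the normalisation of \<open>z\<close>; it links non-unit vectors to numerical ranges.\<close>
definition rayleigh :: "('a::complex_inner_space \<Rightarrow> 'a) \<Rightarrow> 'a \<Rightarrow> complex" where
  "rayleigh T z = cinner (T z) z / of_real ((norm z)\<^sup>2)"

lemma rayleigh_unit: "norm x = 1 \<Longrightarrow> rayleigh T x = cinner (T x) x"
  by (simp add: rayleigh_def)

lemma rayleigh_in_numrange_on:
  assumes T: "bounded_linear T" and z: "z \<noteq> 0" and M: "\<And>r. r *\<^sub>R z \<in> M"
  shows "rayleigh T z \<in> numrange_on M T"
proof -
  define u where "u = inverse (norm z) *\<^sub>R z"
  have "cinner (T u) u = rayleigh T z"
    unfolding u_def rayleigh_def using z
    by (simp add: linear_scale[OF bounded_linear.linear[OF T]] cinner_scaleR_left cinner_scaleR_right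
        field_simps power2_eq_square)
  moreover have "u \<in> M" "norm u = 1" using M z by (simp_all add: u_def)
  ultimately show ?thesis unfolding numrange_on_def by (metis (mono_tags, lifting) mem_Collect_eq)
qed

lemma isCont_rayleigh:
  assumes T: "bounded_linear T" and z: "z \<noteq> 0"
  shows "isCont (rayleigh T) z"
proof -
  have "isCont (\<lambda>x. cinner (T x) x) z"
    unfolding isCont_def by (intro tendsto_cinner bounded_linear.tendsto[OF T] tendsto_ident_at)
  then show ?thesis unfolding rayleigh_def using z by (intro continuous_intros) auto
qed

lemma numrange_on_cong:
  "(\<And>x. x \<in> M \<Longrightarrow> cinner (A x) x = cinner (B x) x) \<Longrightarrow> numrange_on M A = numrange_on M B"
  unfolding numrange_on_def by (metis (lifting))

lemma numrange_on_bounded: "bounded_linear T \<Longrightarrow> bounded (numrange_on M T)"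
  unfolding bounded_iff numrange_on_def using norm_cinner_op_le by blast

lemma numrange_on_mono: "M \<subseteq> N \<Longrightarrow> numrange_on M T \<subseteq> numrange_on N T"
  unfolding numrange_on_def by blast

lemma numrange_on_nonempty: "\<exists>x\<in>M. norm x = 1 \<Longrightarrow> numrange_on M T \<noteq> {}"
  unfolding numrange_on_def by auto

lemma numrange_nonempty:
  assumes "\<exists>x::'a::complex_inner_space. x \<noteq> 0"
  shows "numrange (T :: 'a \<Rightarrow> 'a) \<noteq> {}"
  using assms numrange_on_nonempty[of UNIV T] unfolding numrange_def by (metis UNIV_I norm_sgn)

lemma infdist_closure_le:
  fixes A B :: "'b::metric_space set"
  assumes "B \<noteq> {}" "\<forall>u\<in>A. \<exists>v\<in>B. dist u v \<le> c" "w \<in> closure A"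
  shows "infdist w (closure B) \<le> c"
proof -
  have "infdist w (closure B) \<le> infdist w B"
    using assms(1) by (intro infdist_mono closure_subset)
  also have "infdist w B \<le> c"
  proof (rule field_le_epsilon)
    fix e :: real assume "0 < e"
    then obtain u where u: "u \<in> A" "dist u w < e" using assms(3) closure_approachable by metis
    then obtain v where v: "v \<in> B" "dist u v \<le> c" using assms(2) by blast
    have "infdist w B \<le> infdist u B + dist w u" by (rule infdist_triangle)
    also have "infdist u B \<le> dist u v" using v(1) by (rule infdist_le)
    finally show "infdist w B \<le> c + e" using u v by (simp add: dist_commute)
  qed
  finally show ?thesis .
qed

lemma hausdorff_dist_le:
  fixes A B :: "complex set"
  assumes "A \<noteq> {}" "B \<noteq> {}" "\<forall>u\<in>A. \<exists>v\<in>B. dist u v \<le> c" "\<forall>v\<in>B. \<exists>u\<in>A. dist v u \<le> c"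
  shows "0 \<le> hausdorff_dist (closure A) (closure B)"
    and "hausdorff_dist (closure A) (closure B) \<le> c"
proof -
  have AB: "infdist w (closure B) \<le> c" if "w \<in> closure A" for w
    using infdist_closure_le[OF assms(2,3) that] .
  have BA: "infdist w (closure A) \<le> c" if "w \<in> closure B" for w
    using infdist_closure_le[OF assms(1,4) that] .
  have s1: "(SUP x\<in>closure A. infdist x (closure B)) \<le> c" using assms(1) AB by (intro cSUP_least) auto
  have s2: "(SUP x\<in>closure B. infdist x (closure A)) \<le> c" using assms(2) BA by (intro cSUP_least) auto
  obtain a where a: "a \<in> closure A" using assms(1) closure_subset by blast
  have "0 \<le> (SUP x\<in>closure A. infdist x (closure B))"
    using AB by (intro cSUP_upper2[OF _ a] infdist_nonneg bdd_aboveI2[where M=c]) auto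
  then show "0 \<le> hausdorff_dist (closure A) (closure B)"
    and "hausdorff_dist (closure A) (closure B) \<le> c"
    using s1 s2 unfolding hausdorff_dist_def by auto
qed

text \<open>An increasing sequence of nonempty subsets of a bounded set \<open>W\<close> whose
  union is dense in \<open>W\<close> converges to \<open>W\<close> in Hausdorff distance: by
  compactness of \<open>closure W\<close>, finitely many of the sets already come
  \<open>\<epsilon>\<close>-close to every point of \<open>W\<close>.\<close>
lemma hausdorff_dist_incseq_tendsto:
  fixes A :: "nat \<Rightarrow> complex set" and W :: "complex set"
  assumes mono: "incseq A" and ne: "\<And>n. A n \<noteq> {}" and sub: "\<And>n. A n \<subseteq> W"
    and bnd: "bounded W" and dense: "W \<subseteq> closure (\<Union>n. A n)"
  shows "(\<lambda>n. hausdorff_dist (closure (A n)) (closure W)) \<longlonglongrightarrow> 0"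
proof (rule LIMSEQ_I)
  fix \<epsilon> :: real assume e: "0 < \<epsilon>"
  define U where "U n = (\<Union>u\<in>A n. ball u (\<epsilon>/2))" for n
  have cov: "closure W \<subseteq> (\<Union>n\<in>UNIV. U n)"
  proof
    fix w assume "w \<in> closure W"
    then have "w \<in> closure (\<Union>n. A n)" using closure_minimal[OF dense closed_closure] by blast
    then obtain u where "u \<in> (\<Union>n. A n)" "dist u w < \<epsilon>/2" using e closure_approachable
      by (metis half_gt_zero)
    then show "w \<in> (\<Union>n\<in>UNIV. U n)" unfolding U_def by auto
  qed
  have opn: "\<And>n. n \<in> UNIV \<Longrightarrow> open (U n)" unfolding U_def by blast
  obtain C where "C \<subseteq> UNIV" and C: "finite C" "closure W \<subseteq> (\<Union>c\<in>C. U c)"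
    by (rule compactE_image[OF compact_closure[THEN iffD2, OF bnd] opn cov])
  define N where "N = Max (insert 0 C)"
  have near: "\<forall>v\<in>W. \<exists>u\<in>A m. dist v u \<le> \<epsilon>/2" if m: "N \<le> m" for m
  proof
    fix v assume "v \<in> W"
    then have "v \<in> (\<Union>c\<in>C. U c)" using C(2) closure_subset by blast
    then obtain c where c: "c \<in> C" "v \<in> U c" by blast
    then obtain u where u: "u \<in> A c" "dist u v < \<epsilon>/2" unfolding U_def by auto
    have "c \<le> N" using C(1) c(1) unfolding N_def by simp
    then have "A c \<subseteq> A m" using m monoD[OF mono] by simp
    then have "u \<in> A m" using u(1) by blast
    then show "\<exists>u\<in>A m. dist v u \<le> \<epsilon>/2" using u(2) by (metis dist_commute less_imp_le)
  qed
  have Wne: "W \<noteq> {}" using ne sub by blast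
  have "norm (hausdorff_dist (closure (A m)) (closure W) - 0) < \<epsilon>" if m: "N \<le> m" for m
  proof -
    have "\<forall>u\<in>A m. \<exists>v\<in>W. dist u v \<le> \<epsilon>/2"
    proof
      fix u assume "u \<in> A m"
      then show "\<exists>v\<in>W. dist u v \<le> \<epsilon>/2" using sub[of m] e by (intro bexI[of _ u]) auto
    qed
    note h = hausdorff_dist_le[OF ne Wne this near[OF m]]
    show ?thesis using h e by simp
  qed
  then show "\<exists>no. \<forall>n\<ge>no. norm (hausdorff_dist (closure (A n)) (closure W) - 0) < \<epsilon>" by blast
qed

section \<open>Part (i): Lipschitz dependence on the operator\<close>

text \<open>For a unit vector \<open>x\<close>, \<open>|\<langle>Ax,x\<rangle> - \<langle>Bx,x\<rangle>| \<le> \<parallel>A - B\<parallel>\<close>.\<close>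
lemma numrange_near:
  assumes A: "bounded_linear A" and B: "bounded_linear B" and u: "u \<in> numrange A"
  shows "\<exists>v\<in>numrange B. dist u v \<le> onorm (\<lambda>x. A x - B x)"
proof -
  obtain x where x: "u = cinner (A x) x" "norm x = 1"
    using u unfolding numrange_def numrange_on_def by auto
  have "cinner (B x) x \<in> numrange B" using x unfolding numrange_def numrange_on_def by auto
  moreover have "dist u (cinner (B x) x) \<le> onorm (\<lambda>x. A x - B x)"
    using norm_cinner_op_le[OF bounded_linear_sub[OF A B] x(2)] x(1)
    by (simp add: dist_norm cinner_diff_left)
  ultimately show ?thesis by blast
qed

lemma numrange_hausdorff_le:
  fixes T S :: "'a::complex_inner_space \<Rightarrow> 'a"
  assumes nontriv: "\<exists>x::'a. x \<noteq> 0" and T: "bounded_op T" and S: "bounded_op S"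
  shows "hausdorff_dist (closure (numrange T)) (closure (numrange S)) \<le> onorm (\<lambda>x. T x - S x)"
proof -
  have lT: "bounded_linear T" and lS: "bounded_linear S" using T S by (auto intro: bounded_op_linear)
  have "onorm (\<lambda>x. S x - T x) = onorm (\<lambda>x. T x - S x)"
    using onorm_neg[of "\<lambda>x. T x - S x"] by simp
  then show ?thesis
    using numrange_near[OF lT lS] numrange_near[OF lS lT]
    by (intro hausdorff_dist_le(2) numrange_nonempty[OF nontriv]) auto
qed

section \<open>Parts (iii) and (iv): compressions to nearby projections\<close>

lemma quadratic_form_diff_le:
  assumes T: "bounded_linear T"
  shows "norm (cinner (T x) x - cinner (T a) a) \<le> onorm T * norm (x - a) * (norm x + norm a)"
proof -
  have "cinner (T x) x - cinner (T a) a = cinner (T (x - a)) x + cinner (T a) (x - a)"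
    by (simp add: linear_diff[OF bounded_linear.linear[OF T]] cinner_diff_left cinner_diff_right)
  also have "norm \<dots> \<le> norm (T (x - a)) * norm x + norm (T a) * norm (x - a)"
    by (rule order_trans[OF norm_triangle_ineq add_mono[OF cinner_le cinner_le]])
  also have "\<dots> \<le> onorm T * norm (x - a) * norm x + onorm T * norm a * norm (x - a)"
    by (intro add_mono mult_right_mono onorm[OF T]) auto
  finally show ?thesis by (simp add: algebra_simps)
qed

text \<open>Perturbation of the Rayleigh quotient: if a unit vector \<open>x\<close> splits as
  \<open>a + r\<close> with \<open>a \<perp> r\<close> and \<open>s = \<parallel>r\<parallel> < 1\<close>, then \<open>\<parallel>a\<parallel>\<^sup>2 = 1 - s\<^sup>2\<close> and
  \<open>\<langle>Tx,x\<rangle>\<close> differs from \<open>\<langle>Ta,a\<rangle>/\<parallel>a\<parallel>\<^sup>2\<close> by at most \<open>\<parallel>T\<parallel> s(2+s)/(1-s\<^sup>2)\<close>.\<close>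
lemma rayleigh_perturbation:
  fixes x a :: "'a::complex_inner_space"
  assumes T: "bounded_linear T" and x: "norm x = 1" and orth: "cinner a (x - a) = 0"
    and s1: "norm (x - a) < 1"
  shows "norm (cinner (T x) x - rayleigh T a)
           \<le> onorm T * (norm (x - a) * (2 + norm (x - a)) / (1 - (norm (x - a))\<^sup>2))"
proof -
  define s where "s = norm (x - a)"
  define K where "K = onorm T"
  define X where "X = cinner (T x) x"
  define Y where "Y = cinner (T a) a"
  have K0: "0 \<le> K" unfolding K_def by (rule onorm_pos_le[OF T])
  have s0: "0 \<le> s" by (simp add: s_def)
  have pyth: "(norm a)\<^sup>2 = 1 - s\<^sup>2"
    using norm_add_sq[of a "x - a"] x orth by (simp add: s_def)
  have N: "0 < 1 - s\<^sup>2" using s0 s1 by (simp add: s_def power_less_one_iff)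
  have "(norm a)\<^sup>2 \<le> 1\<^sup>2" using pyth by simp
  then have na: "norm a \<le> 1" by (rule power2_le_imp_le) simp
  have XY: "norm (X - Y) \<le> 2 * K * s"
  proof -
    have "norm (X - Y) \<le> K * s * (1 + norm a)"
      using quadratic_form_diff_le[OF T, of x a] x by (simp add: X_def Y_def K_def s_def)
    also have "\<dots> \<le> K * s * 2" using na K0 s0 by (intro mult_left_mono) auto
    finally show ?thesis by simp
  qed
  have X: "norm X \<le> K" using norm_cinner_op_le[OF T x] by (simp add: X_def K_def)
  have "(complex_of_real s)\<^sup>2 \<noteq> 1" using N by (simp flip: of_real_power)
  then have eq: "X - rayleigh T a = ((X - Y) - of_real (s\<^sup>2) * X) / of_real (1 - s\<^sup>2)"
    unfolding rayleigh_def pyth Y_def by (simp add: field_simps)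
  have "norm (X - rayleigh T a) = norm ((X - Y) - of_real (s\<^sup>2) * X) / (1 - s\<^sup>2)"
    using N by (simp only: eq norm_divide norm_of_real abs_of_pos)
  also have "\<dots> \<le> (2 * K * s + s\<^sup>2 * K) / (1 - s\<^sup>2)"
  proof (rule divide_right_mono)
    have "norm (of_real (s\<^sup>2) * X) \<le> s\<^sup>2 * K" using X by (simp add: norm_mult norm_power mult_left_mono)
    then show "norm ((X - Y) - of_real (s\<^sup>2) * X) \<le> 2 * K * s + s\<^sup>2 * K"
      using XY norm_triangle_ineq4[of "X - Y" "of_real (s\<^sup>2) * X"] by linarith
  qed (use N in simp)
  also have "\<dots> = K * (s * (2 + s) / (1 - s\<^sup>2))" by (simp add: field_simps power2_eq_square)
  finally show ?thesis by (simp add: X_def K_def s_def)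
qed

lemma perturbation_factor_le:
  fixes s d :: real
  assumes s: "0 \<le> s" "s \<le> d" and d: "d < 1"
  shows "s * (2 + s) / (1 - s\<^sup>2) \<le> d * (1 + 2 / (1 - d)\<^sup>2)"
proof -
  have d0: "0 \<le> d" using s by linarith
  have p: "0 < 1 - d" "0 < 1 - d\<^sup>2" using d d0 by (auto simp: power_less_one_iff abs_less_iff)
  have "s * (2 + s) / (1 - s\<^sup>2) \<le> d * (2 + d) / (1 - d\<^sup>2)"
  proof (rule frac_le)
    show "s * (2 + s) \<le> d * (2 + d)" using s by (intro mult_mono) auto
    show "1 - d\<^sup>2 \<le> 1 - s\<^sup>2" using s by (simp add: power_mono)
  qed (use d0 p in auto)
  also have "\<dots> \<le> d * (1 + 2 / (1 - d)\<^sup>2)"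
  proof -
    have "((1 - d)\<^sup>2 + 2) * (1 - d\<^sup>2) - (2 + d) * (1 - d)\<^sup>2 = (1 - d) * (1 + 2*d + d^3)"
      by (simp add: power2_eq_square power3_eq_cube algebra_simps)
    also have "\<dots> \<ge> 0" using p d0 by simp
    finally have "(2 + d) / (1 - d\<^sup>2) \<le> 1 + 2 / (1 - d)\<^sup>2" using p by (simp add: field_simps)
    then show ?thesis using d0 by (metis mult_left_mono times_divide_eq_right)
  qed
  finally show ?thesis .
qed

lemma compression_numrange:
  "orth_projection P \<Longrightarrow> numrange_on (range P) (\<lambda>x. P (T (P x))) = numrange_on (range P) T"
  by (intro numrange_on_cong orth_projection_compression_form)

text \<open>Every point of the numerical range on \<open>PH\<close> is approximated on \<open>QH\<close> by
  the Rayleigh quotient at \<open>Qx\<close>.\<close>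
lemma compression_approx:
  assumes T: "bounded_linear T" and P: "orth_projection P" and Q: "orth_projection Q"
    and dl: "onorm (\<lambda>x. P x - Q x) < 1" and u: "u \<in> numrange_on (range P) T"
  shows "\<exists>v\<in>numrange_on (range Q) T.
           dist u v \<le> onorm T * onorm (\<lambda>x. P x - Q x) * (1 + 2 / (1 - onorm (\<lambda>x. P x - Q x))\<^sup>2)"
proof -
  define \<delta> where "\<delta> = onorm (\<lambda>x. P x - Q x)"
  obtain x where x: "u = cinner (T x) x" "x \<in> range P" "norm x = 1"
    using u unfolding numrange_on_def by blast
  have lQ: "bounded_linear Q" using Q by (rule orth_projection_linear)
  have s: "norm (x - Q x) \<le> \<delta>"
    using onorm[OF bounded_linear_sub[OF orth_projection_linear[OF P] lQ], of x]
      orth_projection_fixes_range[OF P x(2)] x(3) by (simp add: \<delta>_def)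
  then have s1: "norm (x - Q x) < 1" using dl by (simp add: \<delta>_def)
  then have "Q x \<noteq> 0" using x(3) by auto
  then have v: "rayleigh T (Q x) \<in> numrange_on (range Q) T"
    using rayleigh_in_numrange_on[OF T] range_linear_scaleR[OF lQ] by blast
  have "dist u (rayleigh T (Q x))
          \<le> onorm T * (norm (x - Q x) * (2 + norm (x - Q x)) / (1 - (norm (x - Q x))\<^sup>2))"
    using rayleigh_perturbation[OF T x(3) orth_projection_residual_orthogonal[OF Q] s1] x(1)
    by (simp add: dist_norm)
  also have "\<dots> \<le> onorm T * (\<delta> * (1 + 2 / (1 - \<delta>)\<^sup>2))"
    using perturbation_factor_le[OF norm_ge_zero s] dl onorm_pos_le[OF T]
    by (intro mult_left_mono) (auto simp: \<delta>_def)
  finally have "dist u (rayleigh T (Q x)) \<le> onorm T * \<delta> * (1 + 2 / (1 - \<delta>)\<^sup>2)"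
    by (simp only: mult.assoc)
  with v show ?thesis unfolding \<delta>_def by blast
qed

lemma compression_hausdorff_le:
  fixes T P Q :: "'a::complex_inner_space \<Rightarrow> 'a"
  assumes T: "bounded_op T" and P: "orth_projection P" and Q: "orth_projection Q"
    and P0: "P \<noteq> (\<lambda>x. 0)" and Q0: "Q \<noteq> (\<lambda>x. 0)" and dl: "onorm (\<lambda>x. P x - Q x) < 1"
  shows "0 \<le> hausdorff_dist (closure (numrange_on (range P) (\<lambda>x. P (T (P x)))))
                            (closure (numrange_on (range Q) (\<lambda>x. Q (T (Q x)))))"
      (is "0 \<le> ?h")
    and "hausdorff_dist (closure (numrange_on (range P) (\<lambda>x. P (T (P x)))))
                        (closure (numrange_on (range Q) (\<lambda>x. Q (T (Q x)))))
          \<le> onorm T * onorm (\<lambda>x. P x - Q x) * (1 + 2 / (1 - onorm (\<lambda>x. P x - Q x))\<^sup>2)"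
      (is "_ \<le> ?b")
proof -
  have lT: "bounded_linear T" using T by (rule bounded_op_linear)
  have sym: "onorm (\<lambda>x. Q x - P x) = onorm (\<lambda>x. P x - Q x)"
    using onorm_neg[of "\<lambda>x. P x - Q x"] by simp
  have PQ: "\<forall>u\<in>numrange_on (range P) T. \<exists>v\<in>numrange_on (range Q) T. dist u v \<le> ?b"
    using compression_approx[OF lT P Q dl] by blast
  have QP: "\<forall>v\<in>numrange_on (range Q) T. \<exists>u\<in>numrange_on (range P) T. dist v u \<le> ?b"
    using compression_approx[OF lT Q P, unfolded sym, OF dl] by blast
  note hd = hausdorff_dist_le[OF numrange_on_nonempty[OF orth_projection_unit_vector[OF P P0]]
        numrange_on_nonempty[OF orth_projection_unit_vector[OF Q Q0]] PQ QP]
  show "0 \<le> ?h" and "?h \<le> ?b"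
    unfolding compression_numrange[OF P] compression_numrange[OF Q] by (fact hd(1), fact hd(2))
qed

lemma compression_tendsto:
  fixes T P :: "'a::complex_inner_space \<Rightarrow> 'a" and Ps :: "nat \<Rightarrow> 'a \<Rightarrow> 'a"
  assumes T: "bounded_op T" and Ps: "\<And>n. orth_projection (Ps n)" "\<And>n. Ps n \<noteq> (\<lambda>x. 0)"
    and P: "orth_projection P" "P \<noteq> (\<lambda>x. 0)"
    and lim: "(\<lambda>n. onorm (\<lambda>x. Ps n x - P x)) \<longlonglongrightarrow> 0"
  shows "(\<lambda>n. hausdorff_dist (closure (numrange_on (range (Ps n)) (\<lambda>x. Ps n (T (Ps n x)))))
                             (closure (numrange_on (range P) (\<lambda>x. P (T (P x)))))) \<longlonglongrightarrow> 0"
proof (rule tendsto_sandwich)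
  define \<delta> where "\<delta> n = onorm (\<lambda>x. Ps n x - P x)" for n
  have ev: "\<forall>\<^sub>F n in sequentially. \<delta> n < 1"
    using lim unfolding \<delta>_def by (rule order_tendstoD) simp
  note hd = compression_hausdorff_le[OF T Ps(1) P(1) Ps(2) P(2), folded \<delta>_def]
  show "\<forall>\<^sub>F n in sequentially. 0 \<le> hausdorff_dist (closure (numrange_on (range (Ps n)) (\<lambda>x. Ps n (T (Ps n x)))))
                             (closure (numrange_on (range P) (\<lambda>x. P (T (P x)))))"
    using ev by eventually_elim (rule hd(1))
  show "\<forall>\<^sub>F n in sequentially. hausdorff_dist (closure (numrange_on (range (Ps n)) (\<lambda>x. Ps n (T (Ps n x)))))
                             (closure (numrange_on (range P) (\<lambda>x. P (T (P x))))) \<le> onorm T * \<delta> n * (1 + 2 / (1 - \<delta> n)\<^sup>2)"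
    using ev by eventually_elim (rule hd(2))
  have "(\<lambda>n. onorm T * \<delta> n * (1 + 2 / (1 - \<delta> n)\<^sup>2)) \<longlonglongrightarrow> onorm T * 0 * (1 + 2 / (1 - 0)\<^sup>2)"
    using lim unfolding \<delta>_def[symmetric] by (intro tendsto_intros) auto
  then show "(\<lambda>n. onorm T * \<delta> n * (1 + 2 / (1 - \<delta> n)\<^sup>2)) \<longlonglongrightarrow> 0" by simp
qed simp

section \<open>Part (ii): exhaustion by an increasing sequence of subspaces\<close>

lemma closure_image_isCont:
  fixes x :: "'b::metric_space" and f :: "'b \<Rightarrow> 'c::metric_space"
  assumes "x \<in> closure S" "isCont f x"
  shows "f x \<in> closure (f ` S)"
proof -
  obtain s where s: "\<And>n. s n \<in> S" "s \<longlonglongrightarrow> x" using assms(1) closure_sequential by metis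
  have "(\<lambda>n. f (s n)) \<longlonglongrightarrow> f x" using isCont_tendsto_compose[OF assms(2) s(2)] .
  then show ?thesis unfolding closure_sequential using s(1) by (intro exI[of _ "\<lambda>n. f (s n)"]) auto
qed

text \<open>Density: a unit vector \<open>x\<close> is a limit of nonzero vectors of \<open>\<Union>H\<^sub>n\<close>, and
  the Rayleigh quotient is continuous at \<open>x\<close>.\<close>
lemma numrange_subset_closure_union:
  fixes Hs :: "nat \<Rightarrow> 'a::complex_inner_space set"
  assumes T: "bounded_linear T" and sub: "\<And>n. closed_csubspace (Hs n)"
    and dense: "closure (\<Union>n. Hs n) = UNIV"
  shows "numrange T \<subseteq> closure (\<Union>n. numrange_on (Hs n) T)"
proof
  fix w assume "w \<in> numrange T"
  then obtain x where x: "w = cinner (T x) x" "norm x = 1"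
    unfolding numrange_def numrange_on_def by auto
  then have "x \<noteq> 0" by auto
  have "(\<Union>n. Hs n) \<subseteq> insert 0 ((\<Union>n. Hs n) - {0})" by blast
  then have "x \<in> closure (insert 0 ((\<Union>n. Hs n) - {0}))"
    using closure_mono dense by (metis UNIV_I subsetD)
  then have "x \<in> closure ((\<Union>n. Hs n) - {0})" using \<open>x \<noteq> 0\<close> unfolding closure_insert by blast
  then have "rayleigh T x \<in> closure (rayleigh T ` ((\<Union>n. Hs n) - {0}))"
    using closure_image_isCont isCont_rayleigh[OF T \<open>x \<noteq> 0\<close>] by blast
  moreover have "rayleigh T ` ((\<Union>n. Hs n) - {0}) \<subseteq> (\<Union>n. numrange_on (Hs n) T)"
  proof (rule image_subsetI)
    fix z assume "z \<in> (\<Union>n. Hs n) - {0}"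
    then obtain n where "z \<in> Hs n" "z \<noteq> 0" by blast
    then have "rayleigh T z \<in> numrange_on (Hs n) T"
      by (intro rayleigh_in_numrange_on[OF T] subspace_scaleR[OF sub])
    then show "rayleigh T z \<in> (\<Union>n. numrange_on (Hs n) T)" by blast
  qed
  ultimately have "rayleigh T x \<in> closure (\<Union>n. numrange_on (Hs n) T)"
    using closure_mono by blast
  then show "w \<in> closure (\<Union>n. numrange_on (Hs n) T)" by (simp add: x rayleigh_unit)
qed

lemma numrange_exhaustion:
  fixes Hs :: "nat \<Rightarrow> 'a::complex_hilbert_space set"
  assumes H: "\<forall>n. closed_csubspace (Hs n) \<and> (\<exists>x\<in>Hs n. x \<noteq> 0) \<and> Hs n \<subseteq> Hs (Suc n)"
    and dense: "closure (\<Union>n. Hs n) = UNIV" and T: "bounded_op T"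
  shows "closure (numrange T) = closure (\<Union>n. numrange_on (Hs n) (\<lambda>x. proj_onto (Hs n) (T x)))"
    and "(\<lambda>n. hausdorff_dist (closure (numrange_on (Hs n) (\<lambda>x. proj_onto (Hs n) (T x))))
                              (closure (numrange T))) \<longlonglongrightarrow> 0"
proof -
  have lT: "bounded_linear T" using T by (rule bounded_op_linear)
  have sub: "closed_csubspace (Hs n)" for n using H by blast
  define A where "A n = numrange_on (Hs n) T" for n
  have A_eq: "numrange_on (Hs n) (\<lambda>x. proj_onto (Hs n) (T x)) = A n" for n
    unfolding A_def by (rule numrange_on_cong) (simp add: proj_onto_cinner[OF sub])
  have mono: "incseq A"
    unfolding A_def by (rule incseq_SucI, rule numrange_on_mono) (use H in blast)
  have AW: "A n \<subseteq> numrange T" for n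
    unfolding A_def numrange_def by (rule numrange_on_mono) simp
  have ne: "A n \<noteq> {}" for n
  proof -
    obtain x where "x \<in> Hs n" "x \<noteq> 0" using H by blast
    then have "rayleigh T x \<in> A n"
      unfolding A_def by (intro rayleigh_in_numrange_on[OF lT] subspace_scaleR[OF sub])
    then show ?thesis by blast
  qed
  have WA: "numrange T \<subseteq> closure (\<Union>n. A n)"
    unfolding A_def using numrange_subset_closure_union[OF lT sub dense] .
  show "closure (numrange T) = closure (\<Union>n. numrange_on (Hs n) (\<lambda>x. proj_onto (Hs n) (T x)))"
    unfolding A_eq using closure_minimal[OF WA closed_closure] closure_mono[of "\<Union>n. A n"] AW
    by (simp add: subset_antisym UN_subset_iff)
  show "(\<lambda>n. hausdorff_dist (closure (numrange_on (Hs n) (\<lambda>x. proj_onto (Hs n) (T x))))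
                              (closure (numrange T))) \<longlonglongrightarrow> 0"
    unfolding A_eq using numrange_on_bounded[OF lT, of UNIV]
    by (intro hausdorff_dist_incseq_tendsto[OF mono ne AW _ WA]) (simp add: numrange_def)
qed

theorem lemma4p4:
  fixes dummy :: "'a::complex_hilbert_space"
  assumes nontriv: "\<exists>x::'a. x \<noteq> 0"
  shows
   "(\<forall>T S :: 'a \<Rightarrow> 'a. bounded_op T \<and> bounded_op S \<longrightarrow>
        hausdorff_dist (closure (numrange T)) (closure (numrange S)) \<le> onorm (\<lambda>x. T x - S x))
  \<and> (\<forall>(Hs :: nat \<Rightarrow> 'a set) (T :: 'a \<Rightarrow> 'a).
        (\<forall>n. closed_csubspace (Hs n) \<and> (\<exists>x\<in>Hs n. x \<noteq> 0) \<and> Hs n \<subseteq> Hs (Suc n))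
        \<and> closure (\<Union>n. Hs n) = UNIV \<and> bounded_op T \<longrightarrow>
        closure (numrange T) = closure (\<Union>n. numrange_on (Hs n) (\<lambda>x. proj_onto (Hs n) (T x)))
        \<and> (\<lambda>n. hausdorff_dist (closure (numrange_on (Hs n) (\<lambda>x. proj_onto (Hs n) (T x))))
                               (closure (numrange T))) \<longlonglongrightarrow> 0)
  \<and> (\<forall>T P Q :: 'a \<Rightarrow> 'a. bounded_op T \<and> orth_projection P \<and> orth_projection Q
        \<and> P \<noteq> (\<lambda>x. 0) \<and> Q \<noteq> (\<lambda>x. 0) \<and> onorm (\<lambda>x. P x - Q x) < 1 \<longrightarrow>
        hausdorff_dist (closure (numrange_on (range P) (\<lambda>x. P (T (P x)))))
                       (closure (numrange_on (range Q) (\<lambda>x. Q (T (Q x)))))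
          \<le> onorm T * onorm (\<lambda>x. P x - Q x) * (1 + 2 / (1 - onorm (\<lambda>x. P x - Q x))\<^sup>2))
  \<and> (\<forall>(T :: 'a \<Rightarrow> 'a) (Ps :: nat \<Rightarrow> 'a \<Rightarrow> 'a) P. bounded_op T
        \<and> (\<forall>n. orth_projection (Ps n) \<and> Ps n \<noteq> (\<lambda>x. 0)) \<and> orth_projection P \<and> P \<noteq> (\<lambda>x. 0)
        \<and> (\<lambda>n. onorm (\<lambda>x. Ps n x - P x)) \<longlonglongrightarrow> 0 \<longrightarrow>
        (\<lambda>n. hausdorff_dist (closure (numrange_on (range (Ps n)) (\<lambda>x. Ps n (T (Ps n x)))))
                             (closure (numrange_on (range P) (\<lambda>x. P (T (P x)))))) \<longlonglongrightarrow> 0)"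
  by (intro conjI allI impI; elim conjE;
      (rule numrange_hausdorff_le[OF nontriv] numrange_exhaustion compression_hausdorff_le(2)
        compression_tendsto; blast))

end
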